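(* Let $n\equiv 3\pmod 4$. Then $\{y_1,\ldots,y_n\}$ is a generating set of $\mathcal{AM}_n$ of minimum size. In particular, $\mathcal{AM}_n$ has rank $n$.
   Context: Let $\Omega_n=\{1<2<\cdots<n\}$ and $\mathcal{I}_n$ the monoid of all partial injective maps of $\Omega_n$, written on the right and composed left to right. $\mathcal{AI}_n$ is the set of all $\alpha\in\mathcal{I}_n$ with $\alpha=\sigma|_{\mathrm{Dom}(\alpha)}$ for some even permutation $\sigma$; $\mathcal{PMI}_n$ is the set of monotone (order-preserving or order-reversing) elements and $\mathcal{AM}_n=\mathcal{AI}_n\cap\mathcal{PMI}_n$. The rank of a monoid is the minimum size of a generating set. Let $X_i=\Omega_n\setminus\{i\}$. For $1\leqslant i\leqslant n-1$, $y_i$ is the unique order-reversing partial permutation with domain $X_i$ and image $X_{i+1}$, and $y_n$ is the unique order-preserving partial permutation with domain $X_n$ and image $X_1$. *)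

theory Defs
  imports "HOL-Combinatorics.Permutations"
begin

definition PI :: "nat \<Rightarrow> (nat \<rightharpoonup> nat) set" where
  "PI n = {\<alpha>. dom \<alpha> \<subseteq> {1..n} \<and> ran \<alpha> \<subseteq> {1..n} \<and> inj_on \<alpha> (dom \<alpha>)}"

text \<open>Maps are written on the right and composed left to right: x (alpha beta) = (x alpha) beta.\<close>
definition pcomp :: "(nat \<rightharpoonup> nat) \<Rightarrow> (nat \<rightharpoonup> nat) \<Rightarrow> (nat \<rightharpoonup> nat)" where
  "pcomp \<alpha> \<beta> = \<beta> \<circ>\<^sub>m \<alpha>"

definition pid :: "nat \<Rightarrow> (nat \<rightharpoonup> nat)" where
  "pid n = (\<lambda>x. if x \<in> {1..n} then Some x else None)"

definition AI :: "nat \<Rightarrow> (nat \<rightharpoonup> nat) set" where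
  "AI n = {\<alpha> \<in> PI n. \<exists>\<sigma>. \<sigma> permutes {1..n} \<and> evenperm \<sigma> \<and>
                         (\<forall>x\<in>dom \<alpha>. \<alpha> x = Some (\<sigma> x))}"

definition order_preserving :: "(nat \<rightharpoonup> nat) \<Rightarrow> bool" where
  "order_preserving \<alpha> = (\<forall>x\<in>dom \<alpha>. \<forall>y\<in>dom \<alpha>. x < y \<longrightarrow> the (\<alpha> x) < the (\<alpha> y))"

definition order_reversing :: "(nat \<rightharpoonup> nat) \<Rightarrow> bool" where
  "order_reversing \<alpha> = (\<forall>x\<in>dom \<alpha>. \<forall>y\<in>dom \<alpha>. x < y \<longrightarrow> the (\<alpha> x) > the (\<alpha> y))"

definition PMI :: "nat \<Rightarrow> (nat \<rightharpoonup> nat) set" where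
  "PMI n = {\<alpha> \<in> PI n. order_preserving \<alpha> \<or> order_reversing \<alpha>}"

definition AM :: "nat \<Rightarrow> (nat \<rightharpoonup> nat) set" where
  "AM n = AI n \<inter> PMI n"

inductive_set gen :: "nat \<Rightarrow> (nat \<rightharpoonup> nat) set \<Rightarrow> (nat \<rightharpoonup> nat) set"
  for n :: nat and A :: "(nat \<rightharpoonup> nat) set" where
  gen_id: "pid n \<in> gen n A"
| gen_gen: "a \<in> A \<Longrightarrow> a \<in> gen n A"
| gen_mult: "a \<in> gen n A \<Longrightarrow> b \<in> gen n A \<Longrightarrow> pcomp a b \<in> gen n A"

definition generates :: "nat \<Rightarrow> (nat \<rightharpoonup> nat) set \<Rightarrow> (nat \<rightharpoonup> nat) set \<Rightarrow> bool" where
  "generates n A M = (A \<subseteq> M \<and> gen n A = M)"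

definition rank :: "nat \<Rightarrow> (nat \<rightharpoonup> nat) set \<Rightarrow> nat" where
  "rank n M = (LEAST k. \<exists>A. finite A \<and> card A = k \<and> generates n A M)"

definition Xs :: "nat \<Rightarrow> nat \<Rightarrow> nat set" where
  "Xs n i = {1..n} - {i}"

definition y :: "nat \<Rightarrow> nat \<Rightarrow> (nat \<rightharpoonup> nat)" where
  "y n i = (if i < n then
      (THE \<alpha>. \<alpha> \<in> PI n \<and> order_reversing \<alpha> \<and> dom \<alpha> = Xs n i \<and> ran \<alpha> = Xs n (i+1))
    else
      (THE \<alpha>. \<alpha> \<in> PI n \<and> order_preserving \<alpha> \<and> dom \<alpha> = Xs n n \<and> ran \<alpha> = Xs n 1))"

end

theory Submission
  imports Defs
begin

text \<open>
  For \<open>n \<equiv> 3 (mod 4)\<close> the reflection \<open>x \<mapsto> n + 1 - x\<close> of \<open>{1..n}\<close> is odd.  Hence the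
  identity is the only element of \<open>AM n\<close> with full image, and for all \<open>a, b\<close> there is
  exactly one element \<open>am_map n a b\<close> of \<open>AM n\<close> with domain \<open>X\<^sub>a\<close> and image \<open>X\<^sub>b\<close>: the
  order-preserving one if \<open>a + b\<close> is even and the order-reversing one otherwise.  These
  elements multiply like matrix units, so the generators \<open>y\<^sub>i = am_map n i (i mod n + 1)\<close>
  produce all of them, and with them all partial identities.  An order-reversing element of
  rank at most \<open>n - 2\<close> becomes order-preserving after multiplication by some \<open>am_map n j (j - 1)\<close>,
  and an order-preserving one is moved towards a partial identity of an initial segment by
  the shifts \<open>am_map n i (i + 2)\<close>, which are restrictions of 3-cycles.

  Conversely, the image of a product lies in the image of its last factor, and only the
  identity has full image; so a generating set contains, for every \<open>j\<close>, an element with image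
  \<open>X\<^sub>j\<close>, and therefore has at least \<open>n\<close> elements.
\<close>


section \<open>Cycles and the reflection\<close>

(* Increasing away from a, so it restricts to the order-preserving bijection from X_a onto X_b. *)
definition shift :: "nat \<Rightarrow> nat \<Rightarrow> nat \<Rightarrow> nat" where
  "shift a b x = (if x = a then b else if a < x \<and> x \<le> b then x - 1
      else if b \<le> x \<and> x < a then x + 1 else x)"

lemma shift_self: "shift a a = id"
  by (auto simp: shift_def fun_eq_iff)

lemma shift_apply_self [simp]: "shift a b a = b"
  by (simp add: shift_def)

lemma shift_shift [simp]: "shift b a (shift a b x) = x"
  by (auto simp: shift_def)

lemma inj_shift: "inj (shift a b)"
  by (rule inj_on_inverseI[where g="shift b a"]) simp

lemma shift_Suc_right: "a \<le> b \<Longrightarrow> shift a (Suc b) = transpose b (Suc b) \<circ> shift a b"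
  by (auto simp: shift_def fun_eq_iff transpose_def)

lemma shift_less_mono: "x \<noteq> a \<Longrightarrow> z \<noteq> a \<Longrightarrow> x < z \<Longrightarrow> shift a b x < shift a b z"
  by (auto simp: shift_def)

lemma shift_permutes_evenperm_le:
  assumes "1 \<le> a" "a \<le> b" "b \<le> n"
  shows "shift a b permutes {1..n} \<and> (evenperm (shift a b) \<longleftrightarrow> even (a + b))"
  using assms(2)
proof (induction b rule: dec_induct)
  case base
  show ?case using permutes_id[of "{1..n}"] by (simp add: shift_self id_def)
next
  case (step m)
  then have p: "shift a m permutes {1..n}" and ev: "evenperm (shift a m) \<longleftrightarrow> even (a + m)"
    and t: "transpose m (Suc m) permutes {1..n}"
    using assms by (auto intro: permutes_swap_id)
  have "evenperm (transpose m (Suc m) \<circ> shift a m) \<longleftrightarrow> \<not> evenperm (shift a m)"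
    using permutes_imp_permutation[OF _ p]
    by (simp add: evenperm_comp evenperm_swap permutation_swap_id)
  then show ?case
    using ev permutes_compose[OF p t] by (simp add: shift_Suc_right[OF step.hyps(1)] o_def)
qed

lemma shift_permutes_evenperm:
  assumes "a \<in> {1..n}" "b \<in> {1..n}"
  shows "shift a b permutes {1..n} \<and> (evenperm (shift a b) \<longleftrightarrow> even (a + b))"
proof (cases "a \<le> b")
  case True
  then show ?thesis using assms shift_permutes_evenperm_le by auto
next
  case False
  then have p: "shift b a permutes {1..n} \<and> (evenperm (shift b a) \<longleftrightarrow> even (a + b))"
    using assms shift_permutes_evenperm_le[of b a n] by auto
  have "inv (shift b a) = shift a b"
    by (rule inv_unique_comp) (simp_all add: fun_eq_iff)
  then show ?thesis
    using p permutes_inv[of "shift b a"] evenperm_inv[of "shift b a"]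
    by (auto simp: permutation_permutes)
qed

definition reflect :: "nat \<Rightarrow> nat \<Rightarrow> nat" where
  "reflect n x = (if x \<in> {1..n} then Suc n - x else x)"

lemma reflect_Suc: "reflect (Suc n) = shift (Suc n) 1 \<circ> reflect n"
  by (auto simp: reflect_def shift_def fun_eq_iff)

lemma reflect_less_mono: "1 \<le> x \<Longrightarrow> z \<le> n \<Longrightarrow> x < z \<Longrightarrow> reflect n z < reflect n x"
  by (auto simp: reflect_def)

lemma reflect_permutes_evenperm:
  "reflect n permutes {1..n} \<and> (evenperm (reflect n) \<longleftrightarrow> even (n div 2))"
proof (induction n)
  case 0
  have "reflect 0 = id" by (auto simp: reflect_def)
  then show ?case by (simp add: id_def)
next
  case (Suc n)
  have p: "reflect n permutes {1..Suc n}"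
    using Suc.IH permutes_subset by fastforce
  have s: "shift (Suc n) 1 permutes {1..Suc n}"
    and es: "evenperm (shift (Suc n) 1) \<longleftrightarrow> even n"
    using shift_permutes_evenperm[of "Suc n" "Suc n" 1] by auto
  have "evenperm (reflect (Suc n)) \<longleftrightarrow> (even n \<longleftrightarrow> even (n div 2))"
    using Suc.IH es permutes_imp_permutation[OF _ s] permutes_imp_permutation[OF _ p]
    by (simp add: reflect_Suc evenperm_comp)
  also have "\<dots> \<longleftrightarrow> even (Suc n div 2)" by presburger
  finally show ?case using permutes_compose[OF p s] by (simp add: reflect_Suc o_def)
qed

section \<open>Partial injections\<close>

lemma pcomp_apply: "pcomp a b x = (case a x of None \<Rightarrow> None | Some u \<Rightarrow> b u)"
  by (simp add: pcomp_def map_comp_def)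

lemma pcomp_assoc: "pcomp (pcomp a b) c = pcomp a (pcomp b c)"
  by (simp add: fun_eq_iff pcomp_apply split: option.split)

lemma dom_pcomp: "dom (pcomp a b) = {x. \<exists>u. a x = Some u \<and> u \<in> dom b}"
  by (auto simp: dom_def pcomp_apply split: option.splits)

lemma ran_pcomp: "ran (pcomp a b) = {z. \<exists>x u. a x = Some u \<and> b u = Some z}"
  by (auto simp: ran_def pcomp_apply split: option.splits)

lemma dom_pcomp_eq: "ran a \<subseteq> dom b \<Longrightarrow> dom (pcomp a b) = dom a"
  unfolding dom_pcomp by (auto dest: ranI) (meson domD ranI subsetD)

lemma ran_pcomp_eq:
  assumes "dom b \<subseteq> ran a"
  shows "ran (pcomp a b) = ran b"
proof
  show "ran (pcomp a b) \<subseteq> ran b" by (auto simp: ran_pcomp intro: ranI)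
  show "ran b \<subseteq> ran (pcomp a b)"
  proof
    fix z assume "z \<in> ran b"
    then obtain u where u: "b u = Some z" by (auto simp: ran_def)
    then obtain x where "a x = Some u" using assms by (auto simp: ran_def)
    then show "z \<in> ran (pcomp a b)" using u by (auto simp: ran_pcomp)
  qed
qed

lemma PI_pcomp:
  assumes a: "a \<in> PI n" and b: "b \<in> PI n"
  shows "pcomp a b \<in> PI n"
proof -
  have "inj_on (pcomp a b) (dom (pcomp a b))"
  proof (rule inj_onI)
    fix x1 x2 assume x1: "x1 \<in> dom (pcomp a b)" and x2: "x2 \<in> dom (pcomp a b)"
      and eq: "pcomp a b x1 = pcomp a b x2"
    from x1 obtain u1 where u1: "a x1 = Some u1" "u1 \<in> dom b" by (auto simp: dom_pcomp)
    from x2 obtain u2 where u2: "a x2 = Some u2" "u2 \<in> dom b" by (auto simp: dom_pcomp)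
    have ia: "inj_on a (dom a)" and ib: "inj_on b (dom b)" using a b by (simp_all add: PI_def)
    have "b u1 = b u2" using eq u1 u2 by (simp add: pcomp_apply)
    then have "u1 = u2" using inj_onD[OF ib] u1 u2 by blast
    then have "a x1 = a x2" using u1 u2 by simp
    then show "x1 = x2" using inj_onD[OF ia] u1 u2 by blast
  qed
  moreover have "dom (pcomp a b) \<subseteq> dom a" "ran (pcomp a b) \<subseteq> ran b"
    by (auto simp: dom_pcomp ran_pcomp intro: ranI)
  ultimately show ?thesis using a b unfolding PI_def by blast
qed

lemma card_ran_PI:
  assumes g: "g \<in> PI n"
  shows "card (ran g) = card (dom g)"
proof -
  have "ran g = (\<lambda>x. the (g x)) ` dom g" by (force simp: ran_def dom_def)
  moreover have "inj_on (\<lambda>x. the (g x)) (dom g)"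
  proof (rule inj_onI)
    fix x z assume "x \<in> dom g" "z \<in> dom g" "the (g x) = the (g z)"
    then have "g x = g z" by auto
    then show "x = z" using g \<open>x \<in> dom g\<close> \<open>z \<in> dom g\<close> by (auto simp: PI_def inj_on_def)
  qed
  ultimately show ?thesis by (simp add: card_image)
qed

definition map_on :: "(nat \<Rightarrow> nat) \<Rightarrow> nat set \<Rightarrow> (nat \<rightharpoonup> nat)" where
  "map_on f S = (\<lambda>x. if x \<in> S then Some (f x) else None)"

definition partial_id :: "nat set \<Rightarrow> (nat \<rightharpoonup> nat)" where
  "partial_id S = map_on (\<lambda>x. x) S"

lemma dom_map_on [simp]: "dom (map_on f S) = S"
  by (auto simp: map_on_def dom_def)

lemma ran_map_on [simp]: "ran (map_on f S) = f ` S"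
  by (auto simp: map_on_def ran_def)

lemma map_on_PI:
  assumes "S \<subseteq> {1..n}" "f ` S \<subseteq> {1..n}" "inj_on f S"
  shows "map_on f S \<in> PI n"
proof -
  have "inj_on (map_on f S) S" using assms(3) by (auto simp: inj_on_def map_on_def)
  then show ?thesis using assms by (simp add: PI_def)
qed

lemma ran_pcomp_map_on: "ran (pcomp a (map_on f S)) = f ` (ran a \<inter> S)"
  by (auto simp: pcomp_apply map_on_def ran_def split: if_splits option.splits)

lemma pid_eq_partial_id: "pid n = partial_id {1..n}"
  by (simp add: pid_def partial_id_def map_on_def)

lemma pcomp_partial_id_right:
  assumes "ran a \<subseteq> S"
  shows "pcomp a (partial_id S) = a"
proof
  fix x
  show "pcomp a (partial_id S) x = a x"
    using assms by (cases "a x") (auto simp: pcomp_apply partial_id_def map_on_def ran_def)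
qed

lemma pcomp_partial_id_left:
  assumes "dom a \<subseteq> S"
  shows "pcomp (partial_id S) a = a"
proof
  fix x
  show "pcomp (partial_id S) a x = a x"
    using assms by (auto simp: pcomp_apply partial_id_def map_on_def) (metis domIff subsetD)
qed

lemma pcomp_partial_id: "pcomp (partial_id S) (partial_id T) = partial_id (S \<inter> T)"
  by (simp add: fun_eq_iff pcomp_apply partial_id_def map_on_def)

section \<open>Monotone partial injections\<close>

lemma pcomp_strict_mono:
  assumes a: "\<forall>x\<in>dom a. \<forall>z\<in>dom a. x < z \<longrightarrow> P (the (a x)) (the (a z))"
    and b: "\<forall>u\<in>dom b. \<forall>v\<in>dom b. P u v \<longrightarrow> Q (the (b u)) (the (b v))"
  shows "\<forall>x\<in>dom (pcomp a b). \<forall>z\<in>dom (pcomp a b). x < z \<longrightarrow> Q (the (pcomp a b x)) (the (pcomp a b z))"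
proof (intro ballI impI)
  fix x z assume "x \<in> dom (pcomp a b)" "z \<in> dom (pcomp a b)" "x < z"
  then obtain u v where uv: "a x = Some u" "a z = Some v" "u \<in> dom b" "v \<in> dom b"
    by (auto simp: dom_pcomp)
  then have "P u v" using a \<open>x < z\<close> by (metis domI option.sel)
  then show "Q (the (pcomp a b x)) (the (pcomp a b z))" using b uv by (simp add: pcomp_apply)
qed

lemma order_preserving_pcomp:
  "order_preserving a \<Longrightarrow> order_preserving b \<Longrightarrow> order_preserving (pcomp a b)"
  unfolding order_preserving_def by (rule pcomp_strict_mono)

lemma order_reversing_pcomp:
  "order_reversing a \<Longrightarrow> order_reversing b \<Longrightarrow> order_preserving (pcomp a b)"
  unfolding order_preserving_def order_reversing_def by (rule pcomp_strict_mono[where P="(>)"]) auto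

lemma order_preserving_reversing_pcomp:
  "order_preserving a \<Longrightarrow> order_reversing b \<Longrightarrow> order_reversing (pcomp a b)"
  unfolding order_preserving_def order_reversing_def by (rule pcomp_strict_mono)

lemma order_reversing_preserving_pcomp:
  "order_reversing a \<Longrightarrow> order_preserving b \<Longrightarrow> order_reversing (pcomp a b)"
  unfolding order_preserving_def order_reversing_def by (rule pcomp_strict_mono[where P="(>)"]) auto

lemma monotone_pcomp:
  assumes "order_preserving a \<or> order_reversing a" "order_preserving b \<or> order_reversing b"
  shows "order_preserving (pcomp a b) \<or> order_reversing (pcomp a b)"
  using assms
  by (elim disjE) (simp_all add: order_preserving_pcomp order_reversing_pcomp
      order_preserving_reversing_pcomp order_reversing_preserving_pcomp)

lemma order_preserving_map_on:
  "(\<And>x z. x \<in> S \<Longrightarrow> z \<in> S \<Longrightarrow> x < z \<Longrightarrow> f x < f z) \<Longrightarrow> order_preserving (map_on f S)"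
  by (auto simp: order_preserving_def map_on_def)

lemma order_reversing_map_on:
  "(\<And>x z. x \<in> S \<Longrightarrow> z \<in> S \<Longrightarrow> x < z \<Longrightarrow> f z < f x) \<Longrightarrow> order_reversing (map_on f S)"
  by (auto simp: order_reversing_def map_on_def)

lemma order_preservingD: "order_preserving g \<Longrightarrow> g x = Some u \<Longrightarrow> g z = Some v \<Longrightarrow> x < z \<Longrightarrow> u < v"
  unfolding order_preserving_def by force

lemma order_reversingD: "order_reversing g \<Longrightarrow> g x = Some u \<Longrightarrow> g z = Some v \<Longrightarrow> x < z \<Longrightarrow> v < u"
  unfolding order_reversing_def by force

lemma eq_by_least_disagreement:
  fixes g h :: "nat \<rightharpoonup> nat"
  assumes key: "\<And>g h x u v. P g \<Longrightarrow> P h \<Longrightarrow> ran g = ran h \<Longrightarrow> \<forall>w<x. g w = h w \<Longrightarrow>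
      g x = Some u \<Longrightarrow> h x = Some v \<Longrightarrow> u < v \<Longrightarrow> False"
    and "P g" "P h" "dom g = dom h" "ran g = ran h"
  shows "g = h"
proof (rule ccontr)
  assume "g \<noteq> h"
  then obtain x where x: "g x \<noteq> h x" and below: "\<forall>w<x. g w = h w"
    using exists_least_iff[of "\<lambda>x. g x \<noteq> h x"] by (auto simp: fun_eq_iff)
  then obtain u v where uv: "g x = Some u" "h x = Some v"
    using assms(4) by (metis domIff option.exhaust)
  then consider "u < v" | "v < u" using x by fastforce
  then show False
  proof cases
    case 1
    then show False using key[OF assms(2,3,5) below uv] by simp
  next
    case 2
    have "\<forall>w<x. h w = g w" using below by simp
    then show False using key[OF assms(3,2) assms(5)[symmetric] _ uv(2,1) 2] by simp
  qed
qed

lemma order_preserving_eq: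
  assumes "order_preserving g" "order_preserving h" "dom g = dom h" "ran g = ran h"
  shows "g = h"
proof (rule eq_by_least_disagreement[where P = order_preserving, OF _ assms])
  fix g h x u v
  assume mono: "order_preserving g" "order_preserving h" and "ran g = ran h"
    and below: "\<forall>w<x. g w = h w" and uv: "g x = Some u" "h x = Some v" "u < v"
  have "u \<in> ran h" using uv(1) \<open>ran g = ran h\<close> by (metis ranI)
  then obtain z where z: "h z = Some u" by (auto simp: ran_def)
  consider "z < x" | "z = x" | "x < z" by linarith
  then show False
  proof cases
    case 1
    then have "g z = Some u" using below z by simp
    then show False using order_preservingD[OF mono(1) _ uv(1) 1] by simp
  next
    case 2
    then show False using z uv by simp
  next
    case 3
    then show False using order_preservingD[OF mono(2) uv(2) z 3] uv(3) by simp
  qed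
qed

lemma order_reversing_eq:
  assumes "order_reversing g" "order_reversing h" "dom g = dom h" "ran g = ran h"
  shows "g = h"
proof (rule eq_by_least_disagreement[where P = order_reversing, OF _ assms])
  fix g h x u v
  assume mono: "order_reversing g" "order_reversing h" and "ran g = ran h"
    and below: "\<forall>w<x. g w = h w" and uv: "g x = Some u" "h x = Some v" "u < v"
  have "v \<in> ran g" using uv(2) \<open>ran g = ran h\<close> by (metis ranI)
  then obtain z where z: "g z = Some v" by (auto simp: ran_def)
  consider "z < x" | "z = x" | "x < z" by linarith
  then show False
  proof cases
    case 1
    then have "h z = Some v" using below z by simp
    then show False using order_reversingD[OF mono(2) _ uv(2) 1] by simp
  next
    case 2
    then show False using z uv by simp
  next
    case 3
    then show False using order_reversingD[OF mono(1) uv(1) z 3] uv(3) by simp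
  qed
qed

lemma order_preserving_eq_partial_id:
  assumes "order_preserving g" "dom g = S" "ran g = S"
  shows "g = partial_id S"
  using assms order_preserving_map_on[of S "\<lambda>x. x"]
  by (intro order_preserving_eq) (simp_all add: partial_id_def)

section \<open>Restrictions of even permutations\<close>

definition extends :: "(nat \<Rightarrow> nat) \<Rightarrow> (nat \<rightharpoonup> nat) \<Rightarrow> bool" where
  "extends \<sigma> \<alpha> = (\<forall>x\<in>dom \<alpha>. \<alpha> x = Some (\<sigma> x))"

lemma AI_iff: "\<alpha> \<in> AI n \<longleftrightarrow> \<alpha> \<in> PI n \<and> (\<exists>\<sigma>. \<sigma> permutes {1..n} \<and> evenperm \<sigma> \<and> extends \<sigma> \<alpha>)"
  by (simp add: AI_def extends_def)

lemma extends_map_on: "extends f (map_on f S)"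
  unfolding extends_def dom_map_on by (simp add: map_on_def)

lemma ran_eq_image_if_extends: "extends \<sigma> g \<Longrightarrow> ran g = \<sigma> ` dom g"
  unfolding extends_def ran_def dom_def by force

lemma extends_pcomp:
  assumes "extends s a" "extends t b"
  shows "extends (t \<circ> s) (pcomp a b)"
  unfolding extends_def
proof
  fix x assume "x \<in> dom (pcomp a b)"
  then obtain u where u: "a x = Some u" "u \<in> dom b" by (auto simp: dom_pcomp)
  then have "u = s x" using assms(1) domI[of a x] by (simp add: extends_def)
  then show "pcomp a b x = Some ((t \<circ> s) x)" using assms(2) u by (simp add: extends_def pcomp_apply)
qed

lemma permutes_extending_unique:
  assumes s: "s permutes S" "extends s g" and t: "t permutes S" "extends t g"
    and dom: "dom g \<subseteq> S" "S - dom g \<subseteq> {a}"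
  shows "s = t"
proof
  fix x
  have "S - ran g = t ` (S - dom g)"
    using ran_eq_image_if_extends[OF t(2)] permutes_image[OF t(1)] permutes_inj[OF t(1)]
    by (metis image_set_diff)
  show "s x = t x"
  proof (cases "x \<in> dom g")
    case True
    then show ?thesis using s(2) t(2) by (simp add: extends_def)
  next
    case False
    show ?thesis
    proof (cases "x \<in> S")
      case True
      have "s x \<in> S - ran g"
        using True False ran_eq_image_if_extends[OF s(2)] permutes_in_image[OF s(1)]
          permutes_inj[OF s(1)] by (auto simp: inj_eq)
      moreover have "S - dom g = {x}" using dom(2) True False by blast
      ultimately show ?thesis using \<open>S - ran g = t ` (S - dom g)\<close> by simp
    next
      case False
      then show ?thesis using s(1) t(1) by (simp add: permutes_not_in)
    qed
  qed
qed

lemma AI_iff_evenperm: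
  assumes "g \<in> PI n" "{1..n} - dom g \<subseteq> {a}" "\<sigma> permutes {1..n}" "extends \<sigma> g"
  shows "g \<in> AI n \<longleftrightarrow> evenperm \<sigma>"
proof
  assume "g \<in> AI n"
  then obtain \<tau> where \<tau>: "\<tau> permutes {1..n}" "evenperm \<tau>" "extends \<tau> g" by (auto simp: AI_iff)
  have "dom g \<subseteq> {1..n}" using assms(1) by (simp add: PI_def)
  then have "\<tau> = \<sigma>" using permutes_extending_unique[OF \<tau>(1,3) assms(3,4) _ assms(2)] by simp
  then show "evenperm \<sigma>" using \<tau>(2) by simp
qed (use assms in \<open>auto simp: AI_iff\<close>)

lemma AI_pcomp:
  assumes "a \<in> AI n" "b \<in> AI n"
  shows "pcomp a b \<in> AI n"
proof -
  obtain s t where s: "s permutes {1..n}" "evenperm s" "extends s a"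
    and t: "t permutes {1..n}" "evenperm t" "extends t b"
    using assms by (auto simp: AI_iff)
  have "evenperm (t \<circ> s)"
    using s t permutes_imp_permutation[OF _ s(1)] permutes_imp_permutation[OF _ t(1)]
    by (simp add: evenperm_comp)
  then show ?thesis
    using assms s t permutes_compose[OF s(1) t(1)] extends_pcomp[OF s(3) t(3)] PI_pcomp
    by (auto simp: AI_iff)
qed

lemma AM_pcomp:
  assumes "a \<in> AM n" "b \<in> AM n"
  shows "pcomp a b \<in> AM n"
proof -
  have "pcomp a b \<in> AI n" using assms AI_pcomp by (simp add: AM_def)
  moreover have "pcomp a b \<in> PMI n"
    using assms PI_pcomp monotone_pcomp by (simp add: AM_def PMI_def)
  ultimately show ?thesis by (simp add: AM_def)
qed

lemma pid_AM: "pid n \<in> AM n"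
proof -
  have "pid n \<in> PI n" unfolding pid_eq_partial_id partial_id_def by (rule map_on_PI) auto
  moreover have "extends (\<lambda>x. x) (pid n)"
    unfolding pid_eq_partial_id partial_id_def by (rule extends_map_on)
  moreover have "order_preserving (pid n)"
    unfolding pid_eq_partial_id partial_id_def by (rule order_preserving_map_on)
  ultimately show ?thesis
    by (auto simp: AM_def PMI_def AI_iff intro!: exI[of _ "\<lambda>x. x"] permutes_id[unfolded id_def])
qed

lemma gen_subset_AM: "A \<subseteq> AM n \<Longrightarrow> gen n A \<subseteq> AM n"
proof
  fix g assume "A \<subseteq> AM n" "g \<in> gen n A"
  then show "g \<in> AM n" by (induction rule: gen.induct[OF \<open>g \<in> gen n A\<close>]) (auto simp: pid_AM AM_pcomp)
qed

section \<open>Elements of rank n - 1\<close>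

lemma Xs_subset: "Xs n a \<subseteq> {1..n}"
  by (auto simp: Xs_def)

lemma inj_on_Xs: "inj_on (Xs n) {1..n}"
proof (rule inj_onI)
  fix i j assume "i \<in> {1..n}" "Xs n i = Xs n j"
  then show "i = j" unfolding Xs_def by blast
qed

lemma eq_Xs_if_card:
  assumes "S \<subseteq> {1..n}" "card S + 1 = n"
  obtains a where "a \<in> {1..n}" "S = Xs n a"
proof -
  have "card {1..n} \<noteq> card S" using assms(2) by simp
  then have "S \<noteq> {1..n}" by blast
  then obtain a where a: "a \<in> {1..n}" "a \<notin> S" using assms(1) by blast
  then have "S \<subseteq> Xs n a" using assms(1) by (auto simp: Xs_def)
  moreover have "card (Xs n a) = card S" using a assms(2) by (simp add: Xs_def)
  ultimately have "S = Xs n a" by (intro card_subset_eq) (simp_all add: Xs_def)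
  then show thesis using a that by blast
qed

lemma permutes_image_Xs:
  assumes "p permutes {1..n}"
  shows "p ` Xs n a = Xs n (p a)"
proof -
  have "p ` ({1..n} - {a}) = p ` {1..n} - p ` {a}"
    using permutes_inj[OF assms] by (rule image_set_diff)
  then show ?thesis using permutes_image[OF assms] by (simp add: Xs_def)
qed

definition shift_map :: "nat \<Rightarrow> nat \<Rightarrow> nat \<Rightarrow> (nat \<rightharpoonup> nat)" where
  "shift_map n a b = map_on (shift a b) (Xs n a)"

(* Reflect, then move the image n + 1 - a of a to b: this restricts to the order-reversing
   bijection from X_a onto X_b. *)
definition flip :: "nat \<Rightarrow> nat \<Rightarrow> nat \<Rightarrow> nat \<Rightarrow> nat" where
  "flip n a b = shift (Suc n - a) b \<circ> reflect n"

definition flip_map :: "nat \<Rightarrow> nat \<Rightarrow> nat \<Rightarrow> (nat \<rightharpoonup> nat)" where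
  "flip_map n a b = map_on (flip n a b) (Xs n a)"

lemma flip_permutes_evenperm:
  assumes "a \<in> {1..n}" "b \<in> {1..n}"
  shows "flip n a b permutes {1..n}"
    and "evenperm (flip n a b) \<longleftrightarrow> (even (Suc n - a + b) \<longleftrightarrow> even (n div 2))"
    and "flip n a b a = b"
proof -
  have "Suc n - a \<in> {1..n}" using assms by auto
  then have s: "shift (Suc n - a) b permutes {1..n}"
    and es: "evenperm (shift (Suc n - a) b) \<longleftrightarrow> even (Suc n - a + b)"
    using shift_permutes_evenperm assms(2) by blast+
  have r: "reflect n permutes {1..n}" and er: "evenperm (reflect n) \<longleftrightarrow> even (n div 2)"
    using reflect_permutes_evenperm by blast+
  show "flip n a b permutes {1..n}" unfolding flip_def using r s by (rule permutes_compose)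
  show "evenperm (flip n a b) \<longleftrightarrow> (even (Suc n - a + b) \<longleftrightarrow> even (n div 2))"
    unfolding flip_def using es er permutes_imp_permutation[OF _ s] permutes_imp_permutation[OF _ r]
    by (simp add: evenperm_comp)
  show "flip n a b a = b" using assms(1) by (simp add: flip_def reflect_def)
qed

lemma shift_map:
  assumes "a \<in> {1..n}" "b \<in> {1..n}"
  shows "shift_map n a b \<in> PI n" "order_preserving (shift_map n a b)"
    "dom (shift_map n a b) = Xs n a" "ran (shift_map n a b) = Xs n b"
    "extends (shift a b) (shift_map n a b)"
proof -
  have p: "shift a b permutes {1..n}" using shift_permutes_evenperm[OF assms] by blast
  have im: "shift a b ` Xs n a = Xs n b" using permutes_image_Xs[OF p] by simp
  show "shift_map n a b \<in> PI n" unfolding shift_map_def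
    using im Xs_subset permutes_inj[OF p] by (intro map_on_PI) (auto intro: inj_on_subset)
  show "order_preserving (shift_map n a b)" unfolding shift_map_def
    by (rule order_preserving_map_on) (auto simp: Xs_def shift_less_mono)
  show "dom (shift_map n a b) = Xs n a" "ran (shift_map n a b) = Xs n b"
    using im by (simp_all add: shift_map_def)
  show "extends (shift a b) (shift_map n a b)" unfolding shift_map_def by (rule extends_map_on)
qed

lemma flip_map:
  assumes "a \<in> {1..n}" "b \<in> {1..n}"
  shows "flip_map n a b \<in> PI n" "order_reversing (flip_map n a b)"
    "dom (flip_map n a b) = Xs n a" "ran (flip_map n a b) = Xs n b"
    "extends (flip n a b) (flip_map n a b)"
proof -
  have p: "flip n a b permutes {1..n}" and pa: "flip n a b a = b"
    using flip_permutes_evenperm[OF assms] by blast+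
  have im: "flip n a b ` Xs n a = Xs n b" using permutes_image_Xs[OF p] pa by simp
  show "flip_map n a b \<in> PI n" unfolding flip_map_def
    using im Xs_subset permutes_inj[OF p] by (intro map_on_PI) (auto intro: inj_on_subset)
  show "order_reversing (flip_map n a b)" unfolding flip_map_def
  proof (rule order_reversing_map_on)
    fix x z assume xz: "x \<in> Xs n a" "z \<in> Xs n a" "x < z"
    then have "reflect n z < reflect n x" "reflect n x \<noteq> Suc n - a" "reflect n z \<noteq> Suc n - a"
      using assms(1) by (auto simp: Xs_def reflect_def)
    then show "flip n a b z < flip n a b x" by (simp add: flip_def shift_less_mono)
  qed
  show "dom (flip_map n a b) = Xs n a" "ran (flip_map n a b) = Xs n b"
    using im by (simp_all add: flip_map_def)
  show "extends (flip n a b) (flip_map n a b)" unfolding flip_map_def by (rule extends_map_on)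
qed

lemma corank_one_AI_iff:
  assumes "g \<in> PI n" "dom g = Xs n a" "\<sigma> permutes {1..n}" "extends \<sigma> g"
  shows "g \<in> AI n \<longleftrightarrow> evenperm \<sigma>"
proof -
  have "{1..n} - dom g \<subseteq> {a}" using assms(2) by (auto simp: Xs_def)
  then show ?thesis using AI_iff_evenperm[OF assms(1) _ assms(3,4)] by blast
qed

lemma shift_map_in_AM_iff:
  assumes "a \<in> {1..n}" "b \<in> {1..n}"
  shows "shift_map n a b \<in> AM n \<longleftrightarrow> even (a + b)"
proof -
  have p: "shift a b permutes {1..n}" and e: "evenperm (shift a b) \<longleftrightarrow> even (a + b)"
    using shift_permutes_evenperm[OF assms] by blast+
  have "shift_map n a b \<in> AI n \<longleftrightarrow> evenperm (shift a b)"
    using corank_one_AI_iff[OF shift_map(1,3)[OF assms] p shift_map(5)[OF assms]] .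
  moreover have "shift_map n a b \<in> PMI n" using shift_map(1,2)[OF assms] by (simp add: PMI_def)
  ultimately show ?thesis using e by (simp add: AM_def)
qed

lemma flip_map_in_AM_iff:
  assumes "n mod 4 = 3" "a \<in> {1..n}" "b \<in> {1..n}"
  shows "flip_map n a b \<in> AM n \<longleftrightarrow> odd (a + b)"
proof -
  have p: "flip n a b permutes {1..n}"
    and e: "evenperm (flip n a b) \<longleftrightarrow> (even (Suc n - a + b) \<longleftrightarrow> even (n div 2))"
    using flip_permutes_evenperm[OF assms(2,3)] by blast+
  have "a \<le> n" using assms(2) by simp
  then have "even (Suc n - a + b) \<longleftrightarrow> even (a + b)" "odd (n div 2)"
    using assms(1) by presburger+
  then have "evenperm (flip n a b) \<longleftrightarrow> odd (a + b)" using e by simp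
  moreover have "flip_map n a b \<in> AI n \<longleftrightarrow> evenperm (flip n a b)"
    using corank_one_AI_iff[OF flip_map(1,3)[OF assms(2,3)] p flip_map(5)[OF assms(2,3)]] .
  moreover have "flip_map n a b \<in> PMI n" using flip_map(1,2)[OF assms(2,3)] by (simp add: PMI_def)
  ultimately show ?thesis by (simp add: AM_def)
qed

(* For n mod 4 = 3 the unique element of AM n with domain X_a and image X_b (AM_eq_am_map):
   shift a b has the parity of a + b, and flip n a b the opposite one since the reflection is odd. *)
definition am_map :: "nat \<Rightarrow> nat \<Rightarrow> nat \<Rightarrow> (nat \<rightharpoonup> nat)" where
  "am_map n a b = (if even (a + b) then shift_map n a b else flip_map n a b)"

lemma am_map_even:
  assumes "even (a + b)"
  shows "am_map n a b = shift_map n a b"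
  using assms by (simp add: am_map_def)

lemma am_map:
  assumes "n mod 4 = 3" "a \<in> {1..n}" "b \<in> {1..n}"
  shows "am_map n a b \<in> AM n" "dom (am_map n a b) = Xs n a" "ran (am_map n a b) = Xs n b"
  using assms shift_map_in_AM_iff[OF assms(2,3)] flip_map_in_AM_iff[OF assms]
    shift_map(3,4)[OF assms(2,3)] flip_map(3,4)[OF assms(2,3)]
  by (simp_all add: am_map_def)

lemma AM_eq_am_map:
  assumes "n mod 4 = 3" "g \<in> AM n" "a \<in> {1..n}" "b \<in> {1..n}"
    and "dom g = Xs n a" "ran g = Xs n b"
  shows "g = am_map n a b"
proof -
  have "order_preserving g \<or> order_reversing g" using assms(2) by (simp add: AM_def PMI_def)
  then show ?thesis
  proof
    assume "order_preserving g"
    then have "g = shift_map n a b"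
      using shift_map[OF assms(3,4)] assms(5,6) by (intro order_preserving_eq) simp_all
    then show ?thesis using shift_map_in_AM_iff[OF assms(3,4)] assms(2) by (simp add: am_map_def)
  next
    assume "order_reversing g"
    then have "g = flip_map n a b"
      using flip_map[OF assms(3,4)] assms(5,6) by (intro order_reversing_eq) simp_all
    then show ?thesis using flip_map_in_AM_iff[OF assms(1,3,4)] assms(2) by (simp add: am_map_def)
  qed
qed

lemma am_map_pcomp:
  assumes "n mod 4 = 3" "i \<in> {1..n}" "j \<in> {1..n}" "k \<in> {1..n}"
  shows "pcomp (am_map n i j) (am_map n j k) = am_map n i k"
proof (rule AM_eq_am_map[OF assms(1) _ assms(2,4)])
  show "pcomp (am_map n i j) (am_map n j k) \<in> AM n"
    using am_map assms by (intro AM_pcomp) simp_all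
  show "dom (pcomp (am_map n i j) (am_map n j k)) = Xs n i"
    using am_map assms by (subst dom_pcomp_eq) simp_all
  show "ran (pcomp (am_map n i j) (am_map n j k)) = Xs n k"
    using am_map assms by (subst ran_pcomp_eq) simp_all
qed

lemma am_map_self: "am_map n a a = partial_id (Xs n a)"
  by (simp add: am_map_def shift_map_def partial_id_def shift_self id_def)

lemma pcomp_am_map_cancel_left:
  assumes "n mod 4 = 3" "a \<in> {1..n}" "b \<in> {1..n}" "dom g \<subseteq> Xs n a"
  shows "pcomp (am_map n a b) (pcomp (am_map n b a) g) = g"
  using assms
  by (simp add: pcomp_assoc[symmetric] am_map_pcomp am_map_self pcomp_partial_id_left)

lemma pcomp_am_map_cancel_right:
  assumes "n mod 4 = 3" "a \<in> {1..n}" "b \<in> {1..n}" "ran g \<subseteq> Xs n a"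
  shows "pcomp (pcomp g (am_map n a b)) (am_map n b a) = g"
  using assms
  by (simp add: pcomp_assoc am_map_pcomp am_map_self pcomp_partial_id_right)

lemma AM_full_rank:
  assumes n: "n mod 4 = 3" and g: "g \<in> AM n" and r: "ran g = {1..n}"
  shows "g = pid n"
proof -
  have gP: "g \<in> PI n" and m: "order_preserving g \<or> order_reversing g"
    using g by (simp_all add: AM_def PMI_def)
  have "dom g \<subseteq> {1..n}" using gP by (simp add: PI_def)
  moreover have "card (dom g) = n" using card_ran_PI[OF gP] r by simp
  ultimately have d: "dom g = {1..n}" by (intro card_subset_eq) auto
  from m show ?thesis
  proof
    assume "order_preserving g"
    then show ?thesis using d r by (simp add: pid_eq_partial_id order_preserving_eq_partial_id)
  next
    assume "order_reversing g"
    have p: "reflect n permutes {1..n}" and e: "evenperm (reflect n) \<longleftrightarrow> even (n div 2)"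
      using reflect_permutes_evenperm by blast+
    have "order_reversing (map_on (reflect n) {1..n})"
      by (rule order_reversing_map_on) (simp add: reflect_less_mono)
    then have "g = map_on (reflect n) {1..n}"
      using \<open>order_reversing g\<close> d r permutes_image[OF p] by (intro order_reversing_eq) simp_all
    then have "g \<in> AI n \<longleftrightarrow> evenperm (reflect n)"
      using AI_iff_evenperm[OF gP _ p] d extends_map_on by simp
    moreover have "odd (n div 2)" using n by presburger
    ultimately show ?thesis using g e by (simp add: AM_def)
  qed
qed

lemma y_eq_am_map:
  assumes n: "n mod 4 = 3" and i: "i \<in> {1..n}"
  shows "y n i = am_map n i (i mod n + 1)"
proof (cases "i < n")
  case True
  then have i': "Suc i \<in> {1..n}" and "odd (i + Suc i)" by auto
  then have "am_map n i (i mod n + 1) = flip_map n i (Suc i)" using True by (simp add: am_map_def)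
  moreover have "y n i = flip_map n i (Suc i)"
    unfolding y_def if_P[OF True]
    by (rule the_equality; insert flip_map[OF i i']) (simp, (rule order_reversing_eq; simp))
  ultimately show ?thesis by simp
next
  case False
  then have "i = n" and nn: "n \<in> {1..n}" and one: "1 \<in> {1..n}" using i by auto
  have "even (n + 1)" using n by presburger
  then have "am_map n i (i mod n + 1) = shift_map n n 1" using \<open>i = n\<close> by (simp add: am_map_def)
  moreover have "y n n = shift_map n n 1"
    unfolding y_def if_not_P[OF less_irrefl]
    by (rule the_equality; insert shift_map[OF nn one]) (simp, (rule order_preserving_eq; simp))
  ultimately show ?thesis using \<open>i = n\<close> by simp
qed

section \<open>Generation\<close>

lemma am_map_in_gen:
  assumes n: "n mod 4 = 3" and i: "i \<in> {1..n}" and j: "j \<in> {1..n}"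
  shows "am_map n i j \<in> gen n (y n ` {1..n})"
proof -
  let ?G = "gen n (y n ` {1..n})"
  have n0: "0 < n" using i by simp
  have next_in_gen: "am_map n x (x mod n + 1) \<in> ?G" if "x \<in> {1..n}" for x
    using y_eq_am_map[OF n that] that by (metis gen.gen_gen image_eqI)
  \<comment> \<open>\<open>(i - 1 + k) mod n + 1\<close> is the \<open>k\<close>-th cyclic successor of \<open>i\<close> in \<open>{1..n}\<close>\<close>
  have "am_map n i ((i - 1 + k) mod n + 1) \<in> ?G" if "1 \<le> k" for k
    using that
  proof (induction k rule: dec_induct)
    case base
    then show ?case using next_in_gen[OF i] i by simp
  next
    case (step k)
    define x where "x = (i - 1 + k) mod n + 1"
    have x: "x \<in> {1..n}" using mod_less_divisor[OF n0] by (simp add: x_def Suc_leI)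
    have "x mod n + 1 = (i - 1 + Suc k) mod n + 1" by (simp add: x_def mod_Suc_eq)
    moreover have "pcomp (am_map n i x) (am_map n x (x mod n + 1)) \<in> ?G"
      using step.IH next_in_gen[OF x] by (simp add: x_def gen.gen_mult)
    moreover have "x mod n + 1 \<in> {1..n}" using mod_less_divisor[OF n0] by (simp add: Suc_leI)
    ultimately show ?case using am_map_pcomp[OF n i x] by simp
  qed
  moreover have "1 \<le> j + n - i" using i j by auto
  moreover have "(i - 1 + (j + n - i)) mod n + 1 = j"
  proof -
    have "i - 1 + (j + n - i) = (j - 1) + n" using i j by auto
    then have "(i - 1 + (j + n - i)) mod n = (j - 1) mod n" by (simp only: mod_add_self2)
    moreover have "j - 1 < n" using j by auto
    ultimately show ?thesis using j by simp
  qed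
  ultimately show ?thesis by metis
qed

lemma partial_id_in_gen:
  assumes "\<forall>x\<in>{1..n}. partial_id (Xs n x) \<in> gen n A" and "S \<subseteq> {1..n}"
  shows "partial_id S \<in> gen n A"
proof -
  have "partial_id ({1..n} - C) \<in> gen n A" if "finite C" "C \<subseteq> {1..n}" for C
    using that
  proof (induction C rule: finite_induct)
    case empty
    then show ?case using gen.gen_id[of n A] by (simp add: pid_eq_partial_id)
  next
    case (insert x C)
    have "pcomp (partial_id ({1..n} - C)) (partial_id (Xs n x)) \<in> gen n A"
      using insert.IH assms(1) insert.prems by (intro gen.gen_mult) auto
    moreover have "({1..n} - C) \<inter> Xs n x = {1..n} - insert x C" by (auto simp: Xs_def)
    ultimately show ?case by (simp add: pcomp_partial_id)
  qed
  moreover have "{1..n} - ({1..n} - S) = S" using assms(2) by auto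
  ultimately show ?thesis by (metis Diff_subset finite_Diff finite_atLeastAtMost)
qed

lemma exists_boundary:
  fixes D :: "nat set"
  assumes "c \<notin> D" "c < d" "d \<in> D"
  shows "\<exists>i. c \<le> i \<and> i < d \<and> i \<notin> D \<and> Suc i \<in> D"
  using assms(2,3)
proof (induction d)
  case 0
  then show ?case by simp
next
  case (Suc d)
  show ?case
  proof (cases "d \<in> D")
    case True
    then have "c < d" using Suc.prems(1) assms(1) by (cases "c = d") auto
    then show ?thesis using Suc.IH True less_SucI by blast
  next
    case False
    then show ?thesis using Suc.prems by (intro exI[of _ d]) auto
  qed
qed

(* Only shifts by two places, being 3-cycles and hence even, are available in AM n; hence the
   point missing from D is looked for at distance at most two below a point of D. *)
lemma exists_gap:
  assumes D: "D \<subseteq> {1..n}" and k: "card D + 2 \<le> n" and ne: "D \<noteq> {1..card D}"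
  shows "\<exists>i. 1 \<le> i \<and> i + 2 \<le> n \<and> i \<notin> D \<and> (Suc i \<in> D \<or> i + 2 \<in> D)"
proof -
  have fin: "finite D" using D finite_subset by blast
  show ?thesis
  proof (cases "n \<in> D")
    case True
    have "\<not> {1..n - 2} \<subseteq> D"
    proof
      assume "{1..n - 2} \<subseteq> D"
      then have "insert n {1..n - 2} \<subseteq> D" using True by simp
      then have "card (insert n {1..n - 2}) \<le> card D" using fin by (rule card_mono[rotated])
      then show False using k by simp
    qed
    then obtain c where c: "c \<in> {1..n - 2}" "c \<notin> D" by blast
    then have "c \<notin> insert (n - 1) D" "c < n" using k by auto
    then obtain i where i: "c \<le> i" "i < n" "i \<notin> insert (n - 1) D" "Suc i \<in> insert (n - 1) D"
      using exists_boundary[of c "insert (n - 1) D" n] True by blast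
    then show ?thesis using c True by (intro exI[of _ i]) auto
  next
    case False
    have "\<not> D \<subseteq> {1..card D}" using ne fin by (metis card_atLeastAtMost card_subset_eq diff_Suc_1 finite_atLeastAtMost)
    then obtain d where d: "d \<in> D" "d \<notin> {1..card D}" by blast
    then have "card D < d" using D by auto
    have "\<not> {1..card D} \<subseteq> D" using ne fin by (metis card_atLeastAtMost card_subset_eq diff_Suc_1 finite_atLeastAtMost)
    then obtain c where c: "c \<in> {1..card D}" "c \<notin> D" by blast
    then obtain i where i: "c \<le> i" "i \<notin> D" "Suc i \<in> D"
      using exists_boundary[of c D d] c d \<open>card D < d\<close> by auto
    moreover have "Suc i \<noteq> n" "Suc i \<le> n" using False D i(3) by auto
    ultimately show ?thesis using c by (intro exI[of _ i]) auto
  qed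
qed

lemma sum_shift_image_less:
  assumes "finite D" "i \<notin> D" "Suc i \<in> D \<or> i + 2 \<in> D"
  shows "\<Sum>(shift i (i + 2) ` D) < \<Sum>D"
proof -
  have "inj_on (shift i (i + 2)) D" using inj_shift by (rule inj_on_subset) simp
  then have "\<Sum>(shift i (i + 2) ` D) = sum (shift i (i + 2)) D" by (simp add: sum.reindex)
  also have "\<dots> < \<Sum>D"
  proof (rule sum_strict_mono_ex1[OF assms(1)])
    show "\<forall>x\<in>D. shift i (i + 2) x \<le> x" using assms(2) by (auto simp: shift_def)
    show "\<exists>x\<in>D. shift i (i + 2) x < x"
    proof (cases "Suc i \<in> D")
      case True
      then show ?thesis by (intro bexI[of _ "Suc i"]) (auto simp: shift_def)
    next
      case False
      then show ?thesis using assms(3) by (intro bexI[of _ "i + 2"]) (auto simp: shift_def)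
    qed
  qed
  finally show ?thesis .
qed

lemma dom_pcomp_shift_map:
  assumes "a \<in> {1..n}" "b \<in> {1..n}" "dom g \<subseteq> Xs n a"
  shows "dom (pcomp (shift_map n b a) g) = shift a b ` dom g"
proof
  show "dom (pcomp (shift_map n b a) g) \<subseteq> shift a b ` dom g"
  proof
    fix x assume "x \<in> dom (pcomp (shift_map n b a) g)"
    then have "shift b a x \<in> dom g" by (auto simp: dom_pcomp shift_map_def map_on_def split: if_splits)
    then show "x \<in> shift a b ` dom g" by (metis image_eqI shift_shift)
  qed
  show "shift a b ` dom g \<subseteq> dom (pcomp (shift_map n b a) g)"
  proof
    fix x assume "x \<in> shift a b ` dom g"
    then obtain w where w: "w \<in> dom g" "x = shift a b w" by blast
    have "shift a b ` Xs n a = Xs n b"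
      using permutes_image_Xs shift_permutes_evenperm[OF assms(1,2)] by simp
    then have "x \<in> Xs n b" using w assms(3) by blast
    then show "x \<in> dom (pcomp (shift_map n b a) g)"
      using w by (simp add: dom_pcomp shift_map_def map_on_def)
  qed
qed

lemma ran_pcomp_shift_map: "ran g \<subseteq> Xs n a \<Longrightarrow> ran (pcomp g (shift_map n a b)) = shift a b ` ran g"
  unfolding shift_map_def ran_pcomp_map_on by (simp add: Int_absorb2)

lemma shift_dom_reduction:
  assumes n: "n mod 4 = 3" and g: "g \<in> PI n" "order_preserving g"
    and i: "1 \<le> i" "i + 2 \<le> n" "i \<notin> dom g"
  defines "g' \<equiv> pcomp (am_map n (i + 2) i) g"
  shows "g = pcomp (am_map n i (i + 2)) g'" "g' \<in> PI n" "order_preserving g'"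
    "dom g' = shift i (i + 2) ` dom g" "ran g' = ran g"
proof -
  have ii: "i \<in> {1..n}" "i + 2 \<in> {1..n}" using i by auto
  have DX: "dom g \<subseteq> Xs n i" using g(1) i(3) by (auto simp: PI_def Xs_def)
  have am: "am_map n (i + 2) i = shift_map n (i + 2) i" by (simp add: am_map_even)
  show "g = pcomp (am_map n i (i + 2)) g'"
    unfolding g'_def using pcomp_am_map_cancel_left[OF n ii DX] by simp
  show "g' \<in> PI n" unfolding g'_def am using shift_map(1)[OF ii(2,1)] g(1) by (rule PI_pcomp)
  show "order_preserving g'" unfolding g'_def am
    using shift_map(2)[OF ii(2,1)] g(2) by (rule order_preserving_pcomp)
  show "dom g' = shift i (i + 2) ` dom g" unfolding g'_def am using dom_pcomp_shift_map[OF ii DX] .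
  show "ran g' = ran g" unfolding g'_def am using shift_map(4)[OF ii(2,1)] DX by (intro ran_pcomp_eq) simp
qed

lemma shift_ran_reduction:
  assumes n: "n mod 4 = 3" and g: "g \<in> PI n" "order_preserving g"
    and i: "1 \<le> i" "i + 2 \<le> n" "i \<notin> ran g"
  defines "g' \<equiv> pcomp g (am_map n i (i + 2))"
  shows "g = pcomp g' (am_map n (i + 2) i)" "g' \<in> PI n" "order_preserving g'"
    "dom g' = dom g" "ran g' = shift i (i + 2) ` ran g"
proof -
  have ii: "i \<in> {1..n}" "i + 2 \<in> {1..n}" using i by auto
  have RX: "ran g \<subseteq> Xs n i" using g(1) i(3) by (auto simp: PI_def Xs_def)
  have am: "am_map n i (i + 2) = shift_map n i (i + 2)" by (simp add: am_map_even)
  show "g = pcomp g' (am_map n (i + 2) i)"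
    unfolding g'_def using pcomp_am_map_cancel_right[OF n ii RX] by simp
  show "g' \<in> PI n" unfolding g'_def am using g(1) shift_map(1)[OF ii] by (rule PI_pcomp)
  show "order_preserving g'" unfolding g'_def am
    using g(2) shift_map(2)[OF ii] by (rule order_preserving_pcomp)
  show "dom g' = dom g" unfolding g'_def am using shift_map(3)[OF ii] RX by (intro dom_pcomp_eq) simp
  show "ran g' = shift i (i + 2) ` ran g" unfolding g'_def am using RX by (rule ran_pcomp_shift_map)
qed

lemma order_preserving_in_gen:
  assumes n: "n mod 4 = 3" and A: "\<forall>i\<in>{1..n}. \<forall>j\<in>{1..n}. am_map n i j \<in> gen n A"
  shows "g \<in> PI n \<Longrightarrow> order_preserving g \<Longrightarrow> card (dom g) + 2 \<le> n \<Longrightarrow> g \<in> gen n A"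
proof (induction "\<Sum>(dom g) + \<Sum>(ran g)" arbitrary: g rule: less_induct)
  case less
  define k where "k = card (dom g)"
  have D: "dom g \<subseteq> {1..n}" and R: "ran g \<subseteq> {1..n}" using less.prems(1) by (auto simp: PI_def)
  then have fin: "finite (dom g)" "finite (ran g)" by (auto intro: finite_subset)
  have k: "card (ran g) = k" "k + 2 \<le> n"
    using card_ran_PI[OF less.prems(1)] less.prems(3) by (simp_all add: k_def)
  have IH: "g' \<in> gen n A" if "g' \<in> PI n" "order_preserving g'" "card (dom g') = k"
      and "\<Sum>(dom g') + \<Sum>(ran g') < \<Sum>(dom g) + \<Sum>(ran g)" for g'
    using less.hyps that k by simp
  have A': "am_map n i (i + 2) \<in> gen n A" "am_map n (i + 2) i \<in> gen n A"
    if "1 \<le> i" "i + 2 \<le> n" for i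
    using A that by simp_all
  consider (initial) "dom g = {1..k}" "ran g = {1..k}" | (dom) "dom g \<noteq> {1..k}" | (ran) "ran g \<noteq> {1..k}"
    by blast
  then show ?case
  proof cases
    case initial
    then have "g = partial_id {1..k}" using less.prems(2) by (intro order_preserving_eq_partial_id)
    moreover have "\<forall>x\<in>{1..n}. partial_id (Xs n x) \<in> gen n A"
      using A by (simp add: am_map_self[symmetric])
    ultimately show ?thesis using partial_id_in_gen[of n A "{1..k}"] k(2) by simp
  next
    case dom
    then obtain i where i: "1 \<le> i" "i + 2 \<le> n" "i \<notin> dom g" "Suc i \<in> dom g \<or> i + 2 \<in> dom g"
      using exists_gap[OF D] k by (auto simp: k_def)
    note red = shift_dom_reduction[OF n less.prems(1,2) i(1-3)]
    have "pcomp (am_map n (i + 2) i) g \<in> gen n A"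
      using IH[OF red(2,3)] red(4,5) sum_shift_image_less[OF fin(1) i(3,4)]
        card_image[OF inj_on_subset[OF inj_shift subset_UNIV]]
      by (simp add: k_def)
    then show ?thesis using red(1) A'[OF i(1,2)] gen.gen_mult by metis
  next
    case ran
    then obtain i where i: "1 \<le> i" "i + 2 \<le> n" "i \<notin> ran g" "Suc i \<in> ran g \<or> i + 2 \<in> ran g"
      using exists_gap[OF R] k by auto
    note red = shift_ran_reduction[OF n less.prems(1,2) i(1-3)]
    have "pcomp g (am_map n i (i + 2)) \<in> gen n A"
      using IH[OF red(2,3)] red(4,5) sum_shift_image_less[OF fin(2) i(3,4)] by (simp add: k_def)
    then show ?thesis using red(1) A'[OF i(1,2)] gen.gen_mult by metis
  qed
qed

lemma order_reversing_in_gen: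
  assumes n: "n mod 4 = 3" and A: "\<forall>i\<in>{1..n}. \<forall>j\<in>{1..n}. am_map n i j \<in> gen n A"
    and g: "g \<in> PI n" "order_reversing g" "card (dom g) + 2 \<le> n"
  shows "g \<in> gen n A"
proof -
  have R: "ran g \<subseteq> {1..n}" using g(1) by (simp add: PI_def)
  then have "card ({1..n} - ran g) \<ge> 2"
    using card_ran_PI[OF g(1)] g(3) by (simp add: card_Diff_subset finite_subset)
  then have "\<not> {1..n} - ran g \<subseteq> {1}" using card_mono[of "{1}" "{1..n} - ran g"] by auto
  then obtain j where j: "j \<in> {1..n}" "j \<notin> ran g" "j \<noteq> 1" by blast
  then have jj: "j \<in> {1..n}" "j - 1 \<in> {1..n}" and "odd (j + (j - 1))" by auto
  then have flip: "am_map n j (j - 1) = flip_map n j (j - 1)" by (simp add: am_map_def)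
  have RX: "ran g \<subseteq> Xs n j" using R j by (auto simp: Xs_def)
  define g' where "g' = pcomp g (am_map n j (j - 1))"
  have "g' \<in> gen n A"
  proof (rule order_preserving_in_gen[OF n A])
    show "g' \<in> PI n" unfolding g'_def flip using g(1) flip_map(1)[OF jj] by (rule PI_pcomp)
    show "order_preserving g'" unfolding g'_def flip
      using g(2) flip_map(2)[OF jj] by (rule order_reversing_pcomp)
    have "dom g' = dom g" unfolding g'_def flip using flip_map(3)[OF jj] RX by (intro dom_pcomp_eq) simp
    then show "card (dom g') + 2 \<le> n" using g(3) by simp
  qed
  then have "pcomp g' (am_map n (j - 1) j) \<in> gen n A" using A jj by (simp add: gen.gen_mult)
  then show ?thesis unfolding g'_def using pcomp_am_map_cancel_right[OF n jj RX] by simp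
qed

lemma AM_subset_gen:
  assumes n: "n mod 4 = 3" and A: "\<forall>i\<in>{1..n}. \<forall>j\<in>{1..n}. am_map n i j \<in> gen n A"
  shows "AM n \<subseteq> gen n A"
proof
  fix g assume g: "g \<in> AM n"
  then have gP: "g \<in> PI n" and m: "order_preserving g \<or> order_reversing g"
    by (simp_all add: AM_def PMI_def)
  have D: "dom g \<subseteq> {1..n}" and R: "ran g \<subseteq> {1..n}" using gP by (simp_all add: PI_def)
  have cr: "card (ran g) = card (dom g)" using card_ran_PI[OF gP] .
  have "card (dom g) \<le> n" using card_mono[OF _ D] by simp
  then consider "card (dom g) = n" | "card (dom g) + 1 = n" | "card (dom g) + 2 \<le> n" by linarith
  then show "g \<in> gen n A"
  proof cases
    case 1
    then have "ran g = {1..n}" using R cr by (intro card_subset_eq) auto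
    then show ?thesis using AM_full_rank[OF n g] gen.gen_id by simp
  next
    case 2
    obtain a where a: "a \<in> {1..n}" "dom g = Xs n a" using eq_Xs_if_card[OF D 2] .
    have "card (ran g) + 1 = n" using 2 cr by simp
    then obtain b where b: "b \<in> {1..n}" "ran g = Xs n b" using eq_Xs_if_card[OF R] by blast
    show ?thesis using AM_eq_am_map[OF n g a(1) b(1) a(2) b(2)] A a(1) b(1) by simp
  next
    case 3
    then show ?thesis using m order_preserving_in_gen[OF n A gP] order_reversing_in_gen[OF n A gP] by blast
  qed
qed

lemma generates_y:
  assumes n: "n mod 4 = 3"
  shows "generates n (y n ` {1..n}) (AM n)"
proof -
  have Y: "y n ` {1..n} \<subseteq> AM n"
  proof
    fix g assume "g \<in> y n ` {1..n}"
    then obtain i where i: "i \<in> {1..n}" "g = y n i" by blast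
    have "i mod n + 1 \<in> {1..n}" using i by (simp add: Suc_leI)
    then show "g \<in> AM n" using am_map(1)[OF n i(1)] y_eq_am_map[OF n i(1)] i(2) by simp
  qed
  have "AM n \<subseteq> gen n (y n ` {1..n})" using am_map_in_gen[OF n] by (intro AM_subset_gen[OF n]) blast
  then show ?thesis using Y gen_subset_AM[OF Y] by (simp add: generates_def)
qed

lemma card_y:
  assumes n: "n mod 4 = 3"
  shows "card (y n ` {1..n}) = n"
proof -
  have "dom (y n i) = Xs n i" if "i \<in> {1..n}" for i
    using that y_eq_am_map[OF n that] am_map(2)[OF n that] by (simp add: Suc_leI)
  then have "inj_on (y n) {1..n}" using inj_on_Xs by (metis inj_on_def)
  then show ?thesis by (simp add: card_image)
qed

section \<open>Lower bound\<close>

lemma finite_PI: "finite (PI n)"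
proof -
  have "PI n \<subseteq> (\<Union>D\<in>Pow {1..n}. {m. dom m = D \<and> ran m \<subseteq> {1..n}})"
    by (auto simp: PI_def)
  moreover have "finite (\<Union>D\<in>Pow {1..n}. {m. dom m = D \<and> ran m \<subseteq> {1..n}})"
    by (intro finite_UN_I) (auto intro: finite_set_of_finite_maps finite_subset)
  ultimately show ?thesis by (rule finite_subset)
qed

lemma generator_with_ran_Xs:
  assumes n: "n mod 4 = 3" and A: "A \<subseteq> AM n" and j: "j \<in> {1..n}"
    and c: "c \<in> gen n A" "ran c = Xs n j"
  shows "\<exists>a\<in>A. ran a = Xs n j"
  using c
proof (induction rule: gen.induct)
  case gen_id
  have "j \<in> ran (pid n)" using j by (simp add: pid_eq_partial_id partial_id_def)
  then show ?case using gen_id by (simp add: Xs_def)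
next
  case (gen_gen a)
  then show ?case by blast
next
  case (gen_mult a b)
  have ab: "a \<in> AM n" "b \<in> AM n" using gen_mult.hyps gen_subset_AM[OF A] by auto
  have "Xs n j \<subseteq> ran b" using gen_mult.prems by (auto simp: ran_pcomp intro: ranI)
  moreover have "ran b \<subseteq> {1..n}" using ab(2) by (simp add: AM_def PMI_def PI_def)
  ultimately consider "ran b = Xs n j" | "ran b = {1..n}" by (auto simp: Xs_def)
  then show ?case
  proof cases
    case 1
    then show ?thesis using gen_mult.IH(2) by blast
  next
    case 2
    then have "b = pid n" using AM_full_rank[OF n ab(2)] by simp
    then have "pcomp a b = a"
      using ab(1) by (simp add: pid_eq_partial_id pcomp_partial_id_right AM_def PMI_def PI_def)
    then show ?thesis using gen_mult.IH(1) gen_mult.prems by simp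
  qed
qed

lemma card_generating_set:
  assumes n: "n mod 4 = 3" and A: "generates n A (AM n)"
  shows "finite A \<and> n \<le> card A"
proof -
  have AM: "A \<subseteq> AM n" and gen: "gen n A = AM n" using A by (simp_all add: generates_def)
  have "A \<subseteq> PI n" using AM by (auto simp: AM_def AI_def)
  then have fin: "finite A" using finite_PI by (rule finite_subset)
  have "Xs n ` {1..n} \<subseteq> ran ` A"
  proof
    fix X assume "X \<in> Xs n ` {1..n}"
    then obtain j where j: "j \<in> {1..n}" "X = Xs n j" by blast
    then have "am_map n j j \<in> gen n A" "ran (am_map n j j) = Xs n j" using am_map[OF n j(1) j(1)] gen by simp_all
    then show "X \<in> ran ` A" using generator_with_ran_Xs[OF n AM j(1)] j(2) by blast
  qed
  then have "card (Xs n ` {1..n}) \<le> card (ran ` A)" using fin by (intro card_mono) simp_all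
  also have "\<dots> \<le> card A" using fin by (rule card_image_le)
  finally show ?thesis using fin card_image[OF inj_on_Xs] by simp
qed

theorem theorem5p8:
  fixes n :: nat
  assumes "n mod 4 = 3"
  shows "generates n (y n ` {1..n}) (AM n)
    \<and> card (y n ` {1..n}) = n
    \<and> (\<forall>A. generates n A (AM n) \<longrightarrow> finite A \<and> n \<le> card A)
    \<and> rank n (AM n) = n"
proof -
  have generates: "generates n (y n ` {1..n}) (AM n)" using assms by (rule generates_y)
  have card: "card (y n ` {1..n}) = n" using assms by (rule card_y)
  have lower: "\<forall>A. generates n A (AM n) \<longrightarrow> finite A \<and> n \<le> card A"
    using card_generating_set[OF assms] by blast
  have "rank n (AM n) = n" unfolding rank_def
  proof (rule Least_equality)
    show "\<exists>A. finite A \<and> card A = n \<and> generates n A (AM n)"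
      using generates card by (intro exI[of _ "y n ` {1..n}"]) simp
    show "n \<le> k" if "\<exists>A. finite A \<and> card A = k \<and> generates n A (AM n)" for k
      using that lower by auto
  qed
  then show ?thesis using generates card lower by blast
qed

end
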